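(* Let $\mu\in(0,1)$ and $\beta(a)=\frac{\mu}{1+a}$. Let $w$ be the (measure-valued) solution of $$\partial_\tau w+\partial_b((1-b)w)+e^{\tau}\beta(e^{\tau}b)w=0,\qquad w(\tau,0)=\int_0^\infty e^{\tau}\beta(e^{\tau}b)w(\tau,b)\,db,$$ with initial condition $w(0,\cdot)=\delta_0$ (the Dirac mass at $0$). Let $W(\tau,b)=C(\tau)(1-b)^{\mu-1}(1+e^{\tau}b)^{-\mu}$ on $[0,1)$ with $C(\tau)>0$ such that $\int_0^1W(\tau,b)db=1$. Then for all $\tau\ge0$, $$\|W(\tau,\cdot)-w(\tau,\cdot)\|_{TV}\ge e^{-\mu\tau}.$$
   Context: $\|\cdot\|_{TV}$ denotes the total variation norm of measures on $[0,1)$, $W(\tau,\cdot)$ being identified with the measure $W(\tau,b)\,db$. *)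

theory Defs
  imports "HOL-Probability.Probability"
begin

definition beta :: "real \<Rightarrow> real \<Rightarrow> real" where
  "beta \<mu> a = \<mu> / (1 + a)"

definition kappa :: "real \<Rightarrow> real \<Rightarrow> real \<Rightarrow> real" where
  "kappa \<mu> \<tau> b = exp \<tau> * beta \<mu> (exp \<tau> * b)"

definition test_fun :: "(real \<Rightarrow> real) \<Rightarrow> bool" where
  "test_fun \<phi> \<longleftrightarrow> \<phi> C1_differentiable_on UNIV \<and> (\<exists>R. \<forall>x. \<bar>x\<bar> > R \<longrightarrow> \<phi> x = 0)"

text \<open>Measure-valued (weak) solution of
  \<partial>_\<tau> w + \<partial>_b((1-b)w) + e^\<tau>\<beta>(e^\<tau> b) w = 0,
  w(\<tau>,0) = \<integral>_0^\<infinity> e^\<tau>\<beta>(e^\<tau> b) w(\<tau>,b) db,  w(0) = \<delta>_0,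
  for \<tau> \<ge> 0: a family of finite (nonnegative) Borel measures on [0,\<infinity>),
  of locally bounded total mass, satisfying for every test function \<phi>
  \<integral>\<phi> dw_\<tau> = \<integral>\<phi> dw_0 + \<integral>_0^\<tau> \<integral> ((1-b)\<phi>'(b) + \<kappa>(s,b)(\<phi>(0) - \<phi>(b))) dw_s(b) ds.\<close>
definition measure_solution :: "real \<Rightarrow> (real \<Rightarrow> real measure) \<Rightarrow> bool" where
  "measure_solution \<mu> w \<longleftrightarrow>
     (\<forall>\<tau>\<ge>0. finite_measure (w \<tau>) \<and> sets (w \<tau>) = sets borel \<and> emeasure (w \<tau>) {..<0} = 0) \<and>
     (\<forall>T\<ge>0. \<exists>M. \<forall>\<tau>\<in>{0..T}. measure (w \<tau>) UNIV \<le> M) \<and>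
     w 0 = return borel 0 \<and>
     (\<forall>\<phi>. test_fun \<phi> \<longrightarrow> (\<forall>\<tau>\<ge>0.
        ((\<lambda>s. LINT b|w s. (1 - b) * deriv \<phi> b + kappa \<mu> s b * (\<phi> 0 - \<phi> b))
           has_integral ((LINT b|w \<tau>. \<phi> b) - (LINT b|w 0. \<phi> b))) {0..\<tau>}))"

definition tv_norm :: "real set \<Rightarrow> (real set \<Rightarrow> real) \<Rightarrow> real" where
  "tv_norm S \<nu> = (SUP P\<in>{P. finite P \<and> disjoint P \<and> \<Union>P = S \<and> P \<subseteq> sets borel}. \<Sum>A\<in>P. \<bar>\<nu> A\<bar>)"

definition Wprof :: "real \<Rightarrow> (real \<Rightarrow> real) \<Rightarrow> real \<Rightarrow> real \<Rightarrow> real" where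
  "Wprof \<mu> C \<tau> b = C \<tau> * (1 - b) powr (\<mu> - 1) * (1 + exp \<tau> * b) powr (-\<mu>)"

end

theory Submission
  imports Defs
begin

text \<open>The drift \<open>b' = 1 - b\<close> carries the initial Dirac mass along the characteristic
  \<open>b(\<tau>) = 1 - exp (-\<tau>)\<close>, while the boundary term only feeds mass into \<open>b = 0\<close>. Test the
  equation against a bump \<open>g (exp \<tau> * (1 - b))\<close> of width \<open>\<epsilon>\<close> around \<open>1\<close>, which moves with this
  characteristic: the transport term cancels exactly, and the only loss is through the death rate
  \<open>exp \<tau> * \<beta> (exp \<tau> * b)\<close>, which on the support of the bump is at most \<open>\<mu> / (1 - \<epsilon>)\<close>. A
  Gronwall argument, run on a time grid because the weak formulation only admits time-independent
  test functions, leaves mass at least \<open>exp (-\<mu>\<tau> / (1 - \<epsilon>))\<close> near the characteristic; letting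
  \<open>\<epsilon> \<rightarrow> 0\<close> yields an atom of mass at least \<open>exp (-\<mu>\<tau>)\<close> at \<open>1 - exp (-\<tau>)\<close>. The absolutely
  continuous profile \<open>W\<close> gives no mass to that point, so the total variation distance is at least
  the mass of the atom.\<close>

definition pos_pow :: "nat \<Rightarrow> real \<Rightarrow> real" where
  "pos_pow n x = max 0 x ^ n"

lemma pos_pow_nonpos: "x \<le> 0 \<Longrightarrow> 1 \<le> n \<Longrightarrow> pos_pow n x = 0"
  unfolding pos_pow_def by (simp add: max_def zero_power)

lemma continuous_on_pos_pow [continuous_intros]:
  "continuous_on S f \<Longrightarrow> continuous_on S (\<lambda>x. pos_pow n (f x))"
  unfolding pos_pow_def by (intro continuous_intros)

lemma has_real_derivative_pos_pow_at_0:
  assumes "2 \<le> n"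
  shows "(pos_pow n has_real_derivative 0) (at 0)"
proof -
  have "((\<lambda>y. pos_pow n y / y) \<longlongrightarrow> 0) (at 0)"
  proof (rule Lim_null_comparison)
    show "\<forall>\<^sub>F y in at 0. norm (pos_pow n y / y) \<le> \<bar>y\<bar>"
    proof (rule eventually_mono[OF eventually_at_ball'[of 1 "0::real" UNIV, OF zero_less_one]])
      fix y :: real assume "y \<in> ball 0 1 \<and> y \<noteq> 0 \<and> y \<in> UNIV"
      then have y: "\<bar>y\<bar> < 1" "y \<noteq> 0" by auto
      have "\<bar>pos_pow n y\<bar> \<le> \<bar>y\<bar> ^ n"
        unfolding pos_pow_def using assms by (cases "0 \<le> y") (auto simp: power_abs zero_power)
      also have "\<dots> \<le> \<bar>y\<bar> ^ 2" using y assms by (intro power_decreasing) auto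
      finally show "norm (pos_pow n y / y) \<le> \<bar>y\<bar>"
        using y by (simp add: abs_divide divide_le_eq power2_eq_square)
    qed
    show "((\<lambda>y. \<bar>y\<bar>) \<longlongrightarrow> 0) (at (0::real))"
      using tendsto_rabs[OF tendsto_ident_at[of "0::real" UNIV]] by simp
  qed
  moreover have "pos_pow n 0 = 0" using assms by (simp add: pos_pow_def)
  ultimately show ?thesis by (simp add: DERIV_def)
qed

lemma has_real_derivative_pos_pow:
  assumes "2 \<le> n"
  shows "(pos_pow n has_real_derivative real n * pos_pow (n - 1) x) (at x)"
proof -
  consider "0 < x" | "x < 0" | "x = 0" by linarith
  then show ?thesis
  proof cases
    case 1
    have ev: "\<forall>\<^sub>F y in nhds x. y ^ n = pos_pow n y"
      using eventually_nhds_in_open[of "{0<..}" x] 1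
      by (auto elim!: eventually_mono simp: pos_pow_def)
    have "((\<lambda>y. y ^ n) has_real_derivative real n * x ^ (n - 1)) (at x)"
      by (rule derivative_eq_intros refl | simp)+
    then have "(pos_pow n has_real_derivative real n * x ^ (n - 1)) (at x)"
      using DERIV_cong_ev[OF refl ev refl] by blast
    then show ?thesis
      using 1 by (simp add: pos_pow_def)
  next
    case 2
    have ev: "\<forall>\<^sub>F y in nhds x. 0 = pos_pow n y"
      using eventually_nhds_in_open[of "{..<0}" x] 2 assms
      by (auto elim!: eventually_mono simp: pos_pow_nonpos)
    have "(pos_pow n has_real_derivative 0) (at x)"
      using DERIV_cong_ev[OF refl ev refl] DERIV_const by blast
    then show ?thesis using 2 assms by (simp add: pos_pow_nonpos)
  next
    case 3
    then show ?thesis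
      using has_real_derivative_pos_pow_at_0[OF assms] assms by (simp add: pos_pow_nonpos)
  qed
qed

text \<open>The bump must be \<open>C\<^sup>2\<close>: its Euler derivative \<open>z \<cdot> bump' e z\<close> is used as a test function too.\<close>

definition bump :: "real \<Rightarrow> real \<Rightarrow> real" where
  "bump e z = pos_pow 3 (e\<^sup>2 - (z - 1)\<^sup>2) / e ^ 6"

definition bump' :: "real \<Rightarrow> real \<Rightarrow> real" where
  "bump' e z = - 6 * (z - 1) * pos_pow 2 (e\<^sup>2 - (z - 1)\<^sup>2) / e ^ 6"

definition bump'' :: "real \<Rightarrow> real \<Rightarrow> real" where
  "bump'' e z = (24 * (z - 1)\<^sup>2 * pos_pow 1 (e\<^sup>2 - (z - 1)\<^sup>2) - 6 * pos_pow 2 (e\<^sup>2 - (z - 1)\<^sup>2)) / e ^ 6"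

lemma has_real_derivative_bump: "(bump e has_real_derivative bump' e z) (at z)"
proof -
  have "((\<lambda>z. pos_pow 3 (e\<^sup>2 - (z - 1)\<^sup>2)) has_real_derivative
      real 3 * pos_pow (3 - 1) (e\<^sup>2 - (z - 1)\<^sup>2) * (- 2 * (z - 1))) (at z)"
    by (rule DERIV_chain2[OF has_real_derivative_pos_pow]) (auto intro!: derivative_eq_intros)
  from DERIV_cdivide[OF this, of "e ^ 6"] show ?thesis
    unfolding bump_def[abs_def] bump'_def by (simp add: algebra_simps)
qed

lemma has_real_derivative_bump': "(bump' e has_real_derivative bump'' e z) (at z)"
proof -
  have "((\<lambda>z. pos_pow 2 (e\<^sup>2 - (z - 1)\<^sup>2)) has_real_derivative
      real 2 * pos_pow (2 - 1) (e\<^sup>2 - (z - 1)\<^sup>2) * (- 2 * (z - 1))) (at z)"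
    by (rule DERIV_chain2[OF has_real_derivative_pos_pow]) (auto intro!: derivative_eq_intros)
  then have "((\<lambda>z. - 6 * (z - 1) * pos_pow 2 (e\<^sup>2 - (z - 1)\<^sup>2)) has_real_derivative
      - 6 * pos_pow 2 (e\<^sup>2 - (z - 1)\<^sup>2)
        + real 2 * pos_pow (2 - 1) (e\<^sup>2 - (z - 1)\<^sup>2) * (- 2 * (z - 1)) * (- 6 * (z - 1))) (at z)"
    by (auto intro!: derivative_eq_intros)
  from DERIV_cdivide[OF this, of "e ^ 6"] show ?thesis
    unfolding bump'_def[abs_def] bump''_def by (simp add: algebra_simps power2_eq_square)
qed

lemma continuous_on_bump: "continuous_on UNIV (bump e)"
  and continuous_on_bump': "continuous_on UNIV (bump' e)"
  and continuous_on_bump'': "continuous_on UNIV (bump'' e)"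
  unfolding bump_def[abs_def] bump'_def[abs_def] bump''_def[abs_def] divide_inverse
  by (intro continuous_intros)+

lemma bump_vanishes:
  assumes "0 < e" "e \<le> \<bar>z - 1\<bar>"
  shows "bump e z = 0" "bump' e z = 0" "bump'' e z = 0"
proof -
  have "e\<^sup>2 \<le> \<bar>z - 1\<bar>\<^sup>2" using power_mono[OF assms(2), of 2] assms by simp
  then have "e\<^sup>2 - (z - 1)\<^sup>2 \<le> 0" by simp
  then show "bump e z = 0" "bump' e z = 0" "bump'' e z = 0"
    by (simp_all add: bump_def bump'_def bump''_def pos_pow_nonpos)
qed

lemma bump_nonneg: "0 < e \<Longrightarrow> 0 \<le> bump e z"
  by (simp add: bump_def pos_pow_def)

lemma bump_le_1: "0 < e \<Longrightarrow> bump e z \<le> 1"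
proof -
  assume e: "0 < e"
  have "pos_pow 3 (e\<^sup>2 - (z - 1)\<^sup>2) \<le> (e\<^sup>2) ^ 3"
    unfolding pos_pow_def by (intro power_mono) auto
  then show ?thesis using e by (simp add: bump_def divide_le_eq flip: power_mult)
qed

lemma bump_at_1: "0 < e \<Longrightarrow> bump e 1 = 1"
  by (simp add: bump_def pos_pow_def flip: power_mult)

lemma test_funI:
  fixes f f' :: "real \<Rightarrow> real"
  assumes "\<And>x. (f has_real_derivative f' x) (at x)" and "continuous_on UNIV f'"
    and "\<And>x. R < \<bar>x\<bar> \<Longrightarrow> f x = 0"
  shows "test_fun f"
  unfolding test_fun_def C1_differentiable_on_def
  using assms by (auto simp: has_real_derivative_iff_has_vector_derivative)

lemma has_real_derivative_reflect_scale:
  assumes "\<And>z. (f has_real_derivative f' z) (at z)"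
  shows "((\<lambda>b. f (a * (1 - b))) has_real_derivative - a * f' (a * (1 - b))) (at b)"
proof -
  have "((\<lambda>b. a * (1 - b)) has_real_derivative - a) (at b)"
    by (auto intro!: derivative_eq_intros)
  from DERIV_chain2[OF assms[of "a * (1 - b)"] this] show ?thesis by (simp add: mult.commute)
qed

lemma test_fun_reflect_scale:
  fixes f f' :: "real \<Rightarrow> real"
  assumes f: "\<And>z. (f has_real_derivative f' z) (at z)" and f': "continuous_on UNIV f'"
    and supp: "\<And>z. R < \<bar>z\<bar> \<Longrightarrow> f z = 0" and a: "a \<noteq> 0"
  shows "test_fun (\<lambda>b. f (a * (1 - b)))"
proof (rule test_funI[OF has_real_derivative_reflect_scale[OF f]])
  show "continuous_on UNIV (\<lambda>b. - a * f' (a * (1 - b)))"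
    by (intro continuous_intros continuous_on_compose2[OF f']) auto
  fix b :: real assume b: "1 + \<bar>R\<bar> / \<bar>a\<bar> < \<bar>b\<bar>"
  have "\<bar>R\<bar> < \<bar>a\<bar> * (\<bar>b\<bar> - 1)" using b a by (simp add: field_simps)
  also have "\<dots> \<le> \<bar>a * (1 - b)\<bar>" by (simp add: abs_mult mult_left_mono)
  finally show "f (a * (1 - b)) = 0" by (intro supp) linarith
qed

lemma bounded_if_vanishes_off_compact:
  fixes f :: "real \<Rightarrow> real"
  assumes "continuous_on UNIV f" "compact S" "\<And>z. z \<notin> S \<Longrightarrow> f z = 0"
  shows "\<exists>B. \<forall>z. \<bar>f z\<bar> \<le> B"
proof -
  have "compact (f ` S)"
    by (rule compact_continuous_image[OF continuous_on_subset[OF assms(1)] assms(2)]) simp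
  then obtain B where "\<forall>y\<in>f ` S. \<bar>y\<bar> \<le> B"
    using compact_imp_bounded bounded_real by metis
  then have "\<bar>f z\<bar> \<le> max B 0" for z using assms(3) by (cases "z \<in> S") auto
  then show ?thesis by blast
qed

text \<open>\<open>euler_bump e (e\<^sup>r z)\<close> is the derivative in \<open>r\<close> of \<open>bump e (e\<^sup>r z)\<close>.\<close>

definition euler_bump :: "real \<Rightarrow> real \<Rightarrow> real" where
  "euler_bump e z = z * bump' e z"

definition euler_bump' :: "real \<Rightarrow> real \<Rightarrow> real" where
  "euler_bump' e z = bump' e z + z * bump'' e z"

lemma has_real_derivative_euler_bump: "(euler_bump e has_real_derivative euler_bump' e z) (at z)"
  using DERIV_mult[OF DERIV_ident has_real_derivative_bump'[of e z]]
  unfolding euler_bump_def[abs_def] euler_bump'_def by (simp add: mult.commute)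

lemma continuous_on_euler_bump: "continuous_on UNIV (euler_bump e)"
  unfolding euler_bump_def[abs_def] using continuous_on_bump' by (intro continuous_intros) auto

lemma continuous_on_euler_bump': "continuous_on UNIV (euler_bump' e)"
  unfolding euler_bump'_def[abs_def]
  using continuous_on_bump' continuous_on_bump'' by (intro continuous_intros) auto

lemma euler_bump_bounded:
  assumes "0 < e"
  shows "\<exists>B\<ge>1. \<forall>z. \<bar>euler_bump e z\<bar> \<le> B \<and> \<bar>z * euler_bump' e z\<bar> \<le> B"
proof -
  have vanish: "euler_bump e z = 0" "z * euler_bump' e z = 0" if "z \<notin> cball 1 e" for z
    using that bump_vanishes[OF assms, of z]
    by (auto simp: euler_bump_def euler_bump'_def dist_real_def abs_minus_commute)
  obtain B1 where B1: "\<forall>z. \<bar>euler_bump e z\<bar> \<le> B1"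
    using bounded_if_vanishes_off_compact[OF continuous_on_euler_bump, of "cball 1 e"] vanish(1)
    by (metis compact_cball)
  have "continuous_on UNIV (\<lambda>z. z * euler_bump' e z)"
    using continuous_on_euler_bump' by (intro continuous_intros) auto
  then obtain B2 where B2: "\<forall>z. \<bar>z * euler_bump' e z\<bar> \<le> B2"
    using bounded_if_vanishes_off_compact[of _ "cball 1 e"] vanish(2) by (metis compact_cball)
  show ?thesis
    using B1 B2 by (intro exI[of _ "max 1 (max B1 B2)"]) (auto simp: le_max_iff_disj)
qed

lemma has_real_derivative_exp_scaling:
  assumes "(f has_real_derivative f' (exp \<rho> * z)) (at (exp \<rho> * z))"
  shows "((\<lambda>\<rho>. f (exp \<rho> * z)) has_real_derivative exp \<rho> * z * f' (exp \<rho> * z)) (at \<rho>)"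
proof -
  have "((\<lambda>\<rho>. exp \<rho> * z) has_real_derivative exp \<rho> * z) (at \<rho>)"
    by (auto intro!: derivative_eq_intros)
  from DERIV_chain2[OF assms this] show ?thesis by (simp add: mult.commute)
qed

lemma exp_scaling_increment_le:
  fixes f f' :: "real \<Rightarrow> real"
  assumes f: "\<And>x. (f has_real_derivative f' x) (at x)"
    and bound: "\<And>x. x * f' x \<le> C" and h: "0 \<le> h"
  shows "f (exp h * z) - f z \<le> h * C"
proof (cases "h = 0")
  case False
  then have "0 < h" using h by simp
  from MVT2[OF this, of "\<lambda>\<rho>. f (exp \<rho> * z)" "\<lambda>\<rho>. exp \<rho> * z * f' (exp \<rho> * z)"]
  obtain \<zeta> where "f (exp h * z) - f (exp 0 * z) = (h - 0) * (exp \<zeta> * z * f' (exp \<zeta> * z))"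
    using has_real_derivative_exp_scaling[of f f' _ z, OF f] by blast
  moreover have "h * (exp \<zeta> * z * f' (exp \<zeta> * z)) \<le> h * C"
    using bound[of "exp \<zeta> * z"] h by (rule mult_left_mono)
  ultimately show ?thesis by simp
qed simp

text \<open>The first-order term is taken at the right endpoint \<open>\<rho> = h\<close>, i.e. at the bump of the new time.\<close>

lemma exp_scaling_increment_ge:
  fixes f f' g' :: "real \<Rightarrow> real"
  assumes f: "\<And>x. (f has_real_derivative f' x) (at x)"
    and g: "\<And>x. ((\<lambda>x. x * f' x) has_real_derivative g' x) (at x)"
    and bound: "\<And>x. x * g' x \<le> C" and h: "0 \<le> h"
  shows "h * (exp h * z * f' (exp h * z)) - C * h\<^sup>2 \<le> f (exp h * z) - f z"
proof (cases "h = 0")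
  case False
  then have h0: "0 < h" using h by simp
  define k where "k \<rho> = f (exp \<rho> * z) - \<rho> * (exp \<rho> * z * f' (exp \<rho> * z))" for \<rho>
  have "(k has_real_derivative - \<rho> * (exp \<rho> * z * g' (exp \<rho> * z))) (at \<rho>)" for \<rho>
  proof -
    have "(k has_real_derivative exp \<rho> * z * f' (exp \<rho> * z)
        - (1 * (exp \<rho> * z * f' (exp \<rho> * z)) + exp \<rho> * z * g' (exp \<rho> * z) * \<rho>)) (at \<rho>)"
      unfolding k_def[abs_def]
      by (rule DERIV_diff[OF has_real_derivative_exp_scaling[of f f' \<rho> z, OF f]
          DERIV_mult[OF DERIV_ident has_real_derivative_exp_scaling[of "\<lambda>x. x * f' x" g' \<rho> z, OF g]]])
    then show ?thesis by (rule DERIV_cong) (simp add: algebra_simps)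
  qed
  from MVT2[OF h0, of k, OF this]
  obtain \<xi> where \<xi>: "0 < \<xi>" "\<xi> < h" "k h - k 0 = (h - 0) * (- \<xi> * (exp \<xi> * z * g' (exp \<xi> * z)))"
    by blast
  have "\<xi> * (exp \<xi> * z * g' (exp \<xi> * z)) \<le> \<xi> * C"
    using bound[of "exp \<xi> * z"] \<xi>(1) by (intro mult_left_mono) auto
  also have "\<dots> \<le> h * C"
    using bound[of 0] \<xi>(2) by (intro mult_right_mono) auto
  finally
  have "h * (\<xi> * (exp \<xi> * z * g' (exp \<xi> * z))) \<le> h * (h * C)"
    using h0 by (intro mult_left_mono) auto
  then show ?thesis using \<xi>(3) unfolding k_def by (simp add: power2_eq_square algebra_simps)
qed simp

lemma kappa_nonneg: "0 \<le> \<mu> \<Longrightarrow> 0 \<le> b \<Longrightarrow> 0 \<le> kappa \<mu> u b"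
  unfolding kappa_def beta_def by (simp add: add_pos_nonneg)

lemma kappa_le:
  assumes "0 \<le> \<mu>" "0 \<le> b"
  shows "kappa \<mu> u b \<le> exp u * \<mu>"
proof -
  have "\<mu> / (1 + exp u * b) \<le> \<mu> / 1"
    using assms by (intro divide_left_mono) (auto intro: add_pos_nonneg)
  then have "exp u * (\<mu> / (1 + exp u * b)) \<le> exp u * (\<mu> / 1)" by (rule mult_left_mono) auto
  then show ?thesis unfolding kappa_def beta_def by simp
qed

lemma kappa_le_near_characteristic:
  assumes "0 \<le> \<mu>" "0 \<le> u" "u \<le> s" "\<bar>exp s * (1 - b) - 1\<bar> < e" "e < 1"
  shows "kappa \<mu> u b \<le> \<mu> / (1 - e)"
proof -
  have z: "1 - e < exp s * (1 - b)" "exp s * (1 - b) < 1 + e" using assms(4) by linarith+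
  have "exp u * (1 - b) = exp (u - s) * (exp s * (1 - b))" by (simp add: exp_diff)
  also have "\<dots> \<le> exp s * (1 - b)"
    using assms(3,5) z by (intro mult_left_le_one_le) auto
  finally have "exp u - (1 + e) \<le> exp u * b" using z by (simp add: algebra_simps)
  moreover have "e \<le> e * exp u" using assms(2,5) z by simp
  ultimately have den: "exp u * (1 - e) \<le> 1 + exp u * b" by (simp add: algebra_simps)
  moreover have "0 < exp u * (1 - e)" using assms(5) by simp
  ultimately have "exp u * \<mu> / (1 + exp u * b) \<le> exp u * \<mu> / (exp u * (1 - e))"
    using assms(1) by (intro divide_left_mono) auto
  then show ?thesis unfolding kappa_def beta_def by simp
qed

lemma kappa_measurable [measurable]: "kappa \<mu> u \<in> borel_measurable borel"
  unfolding kappa_def[abs_def] beta_def by measurable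

lemma recurrence_lower_bound:
  fixes a :: "nat \<Rightarrow> real"
  assumes step: "\<And>k. k < N \<Longrightarrow> (1 - x) * a k - c \<le> a (Suc k)"
    and "0 \<le> x" "x \<le> 1" "0 \<le> c"
  shows "(1 - x) ^ N * a 0 - real N * c \<le> a N"
proof -
  have "k \<le> N \<longrightarrow> (1 - x) ^ k * a 0 - real k * c \<le> a k" for k
  proof (induction k)
    case (Suc k)
    show ?case
    proof
      assume k: "Suc k \<le> N"
      have "(1 - x) * ((1 - x) ^ k * a 0 - real k * c) \<le> (1 - x) * a k"
        using Suc k assms by (intro mult_left_mono) auto
      moreover have "(1 - x) * (real k * c) \<le> real k * c"
        using assms by (intro mult_left_le_one_le) auto
      ultimately show "(1 - x) ^ Suc k * a 0 - real (Suc k) * c \<le> a (Suc k)"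
        using step[of k] k by (simp add: algebra_simps)
    qed
  qed simp
  then show ?thesis by simp
qed

text \<open>Discretize \<open>[0, T]\<close> into \<open>N\<close> steps: the quadratic errors add up to \<open>O(1/N)\<close>,
  while the linear factors give \<open>(1 - K T / N)\<^sup>N \<longrightarrow> e\<^sup>-\<^sup>K\<^sup>T\<close>.\<close>

lemma discrete_gronwall_lower:
  fixes a :: "real \<Rightarrow> real"
  assumes step: "\<And>t h. 0 \<le> t \<Longrightarrow> 0 \<le> h \<Longrightarrow> t + h \<le> T \<Longrightarrow> (1 - K * h) * a t - C * h\<^sup>2 \<le> a (t + h)"
    and T: "0 \<le> T" and K: "0 \<le> K" and C: "0 \<le> C"
  shows "exp (- (K * T)) * a 0 \<le> a T"
proof -
  obtain n0 :: nat where n0: "K * T \<le> real n0" using real_arch_simple by blast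
  have "(1 + - (K * T) / real N) ^ N * a 0 - C * T\<^sup>2 / real N \<le> a T" if N: "Suc n0 \<le> N" for N
  proof -
    have N0: "0 < real N" using N by simp
    define h where "h = T / real N"
    have h: "0 \<le> h" unfolding h_def using T N0 by simp
    have "(1 - K * h) * a (real k * h) - C * h\<^sup>2 \<le> a (real (Suc k) * h)" if k: "k < N" for k
    proof -
      have "real (Suc k) * T \<le> real N * T" using k T by (intro mult_right_mono) auto
      then have "real (Suc k) * T / real N \<le> T" using N0 by (simp add: divide_le_eq mult.commute)
      moreover have "real k * h + h = real (Suc k) * h" "real (Suc k) * h = real (Suc k) * T / real N"
        by (simp_all add: h_def algebra_simps add_divide_distrib)
      ultimately show ?thesis using step[of "real k * h" h] h by simp
    qed
    moreover have "K * T \<le> real N" using n0 N by linarith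
    then have "K * h \<le> 1" using N0 by (simp add: h_def divide_le_eq)
    ultimately have "(1 - K * h) ^ N * a (real 0 * h) - real N * (C * h\<^sup>2) \<le> a (real N * h)"
      using recurrence_lower_bound[of N "K * h" "\<lambda>k. a (real k * h)" "C * h\<^sup>2"] K h C by simp
    moreover have "real N * (C * h\<^sup>2) = C * T\<^sup>2 / real N" "real N * h = T"
      "1 - K * h = 1 + - (K * T) / real N"
      using N0 by (simp_all add: h_def power2_eq_square)
    ultimately show ?thesis by simp
  qed
  moreover have "(\<lambda>N. (1 + - (K * T) / real N) ^ N * a 0 - C * T\<^sup>2 / real N) \<longlonglongrightarrow> exp (- (K * T)) * a 0 - 0"
    by (intro tendsto_intros tendsto_exp_limit_sequentially lim_const_over_n)
  ultimately show ?thesis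
    by (intro LIMSEQ_le_const2[where X = "\<lambda>N. (1 + - (K * T) / real N) ^ N * a 0 - C * T\<^sup>2 / real N"])
       (auto intro: exI[of _ "Suc n0"])
qed

lemma tv_norm_ge_atom:
  fixes m :: "real measure" and f :: "real \<Rightarrow> real"
  assumes m: "finite_measure m" "sets m = sets borel" and S: "S \<in> sets borel"
    and f: "set_integrable lborel S f" "\<And>b. b \<in> S \<Longrightarrow> 0 \<le> f b" and x: "x \<in> S"
  shows "measure m {x} \<le> tv_norm S (\<lambda>A. (LINT b:A|lborel. f b) - measure m A)"
proof -
  interpret finite_measure m by (rule m(1))
  define \<nu> where "\<nu> A = (LINT b:A|lborel. f b) - measure m A" for A
  define Parts where "Parts = {P. finite P \<and> disjoint P \<and> \<Union>P = S \<and> P \<subseteq> sets borel}"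
  have f_nonneg: "0 \<le> (LINT b:A|lborel. f b)" if "A \<subseteq> S" for A
    unfolding set_lebesgue_integral_def
    using that f(2) by (intro integral_nonneg_AE) (auto simp: indicator_def)
  have "(\<Sum>A\<in>P. \<bar>\<nu> A\<bar>) \<le> (LINT b:S|lborel. f b) + measure m UNIV" if P: "P \<in> Parts" for P
  proof -
    have fin: "finite P" and un: "\<Union>P = S" and sb: "P \<subseteq> sets borel"
      and df: "disjoint_family_on (\<lambda>A. A) P"
      using P unfolding Parts_def disjoint_family_on_def pairwise_def disjnt_def by auto
    have "(LINT b:(\<Union>A\<in>P. A)|lborel. f b) = (\<Sum>A\<in>P. LINT b:A|lborel. f b)"
      by (rule set_integral_finite_Union[OF fin df])
         (use sb un set_integrable_subset[OF f(1)] in auto)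
    moreover have "(\<Sum>A\<in>P. measure m A) \<le> measure m UNIV"
      using finite_measure_finite_Union[OF fin _ df] sb m(2) bounded_measure[of "\<Union>P"]
      by (auto simp: sets_eq_imp_space_eq[OF m(2)])
    moreover have "\<bar>\<nu> A\<bar> \<le> (LINT b:A|lborel. f b) + measure m A" if "A \<in> P" for A
    proof -
      have "0 \<le> (LINT b:A|lborel. f b)" using that un by (intro f_nonneg) auto
      then show ?thesis using measure_nonneg[of m A] unfolding \<nu>_def by linarith
    qed
    then have "(\<Sum>A\<in>P. \<bar>\<nu> A\<bar>) \<le> (\<Sum>A\<in>P. LINT b:A|lborel. f b) + (\<Sum>A\<in>P. measure m A)"
      by (simp add: sum_mono flip: sum.distrib)
    ultimately show ?thesis using un by simp
  qed
  then have bdd: "bdd_above ((\<lambda>P. \<Sum>A\<in>P. \<bar>\<nu> A\<bar>) ` Parts)" by (rule bdd_aboveI2)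
  have P0: "{{x}, S - {x}} \<in> Parts"
    unfolding Parts_def using x S by (auto simp: pairwise_def disjnt_def)
  have "(LINT b:{x}|lborel. f b) = 0"
    unfolding set_lebesgue_integral_def
    by (rule integral_eq_zero_AE) (use AE_lborel_singleton[of x] in \<open>auto elim!: eventually_mono\<close>)
  then have "measure m {x} \<le> \<bar>\<nu> {x}\<bar>" unfolding \<nu>_def by simp
  also have "\<dots> \<le> (\<Sum>A\<in>{{x}, S - {x}}. \<bar>\<nu> A\<bar>)" by (cases "{x} = S - {x}") auto
  also have "\<dots> \<le> (SUP P\<in>Parts. \<Sum>A\<in>P. \<bar>\<nu> A\<bar>)" by (rule cSUP_upper[OF P0 bdd])
  finally show ?thesis unfolding tv_norm_def Parts_def \<nu>_def .
qed

locale bounded_solution =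
  fixes \<mu> :: real and w :: "real \<Rightarrow> real measure" and M T :: real
  assumes mu_pos: "0 < \<mu>" and solution: "measure_solution \<mu> w" and horizon: "0 \<le> T"
    and mass_bound: "\<And>u. 0 \<le> u \<Longrightarrow> u \<le> T \<Longrightarrow> measure (w u) UNIV \<le> M"
begin

lemma finite_measure_w: "0 \<le> u \<Longrightarrow> finite_measure (w u)"
  and sets_w: "0 \<le> u \<Longrightarrow> sets (w u) = sets borel"
  and w_neg_null: "0 \<le> u \<Longrightarrow> emeasure (w u) {..<0} = 0"
  and w_0: "w 0 = return borel 0"
  using solution unfolding measure_solution_def by auto

lemma space_w: "0 \<le> u \<Longrightarrow> space (w u) = UNIV"
  using sets_eq_imp_space_eq[OF sets_w] by simp

lemma AE_w_nonneg: "0 \<le> u \<Longrightarrow> AE b in w u. 0 \<le> b"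
  by (rule AE_I'[of "{..<0}"]) (use w_neg_null sets_w in auto)

lemma M_nonneg: "0 \<le> M"
  using mass_bound[of 0] horizon measure_nonneg[of "w 0" UNIV] by linarith

lemma integrable_w:
  fixes f :: "real \<Rightarrow> real"
  assumes "0 \<le> u" "f \<in> borel_measurable borel" "\<And>b. 0 \<le> b \<Longrightarrow> \<bar>f b\<bar> \<le> D"
  shows "integrable (w u) f"
proof -
  interpret finite_measure "w u" by (rule finite_measure_w[OF assms(1)])
  show ?thesis
    by (rule integrable_const_bound[where B = D])
       (use AE_w_nonneg[OF assms(1)] assms(3) measurable_cong_sets[OF sets_w[OF assms(1)] refl] assms(2)
         in \<open>auto elim!: eventually_mono\<close>)
qed

lemma integral_w_le:
  fixes f :: "real \<Rightarrow> real"
  assumes "0 \<le> u" "u \<le> T" "integrable (w u) f" "\<And>b. 0 \<le> b \<Longrightarrow> f b \<le> D" "0 \<le> D"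
  shows "(LINT b|w u. f b) \<le> D * M"
proof -
  interpret finite_measure "w u" by (rule finite_measure_w[OF assms(1)])
  have "(LINT b|w u. f b) \<le> (LINT b|w u. D)"
    by (rule integral_mono_AE') (use AE_w_nonneg[OF assms(1)] assms(3-5) in \<open>auto elim!: eventually_mono\<close>)
  also have "\<dots> = measure (w u) UNIV * D" using space_w[OF assms(1)] by simp
  also have "\<dots> \<le> M * D" using mass_bound[OF assms(1,2)] assms(5) by (rule mult_right_mono)
  finally show ?thesis by (simp add: mult.commute)
qed

lemma abs_integral_w_le:
  fixes f :: "real \<Rightarrow> real"
  assumes "0 \<le> u" "u \<le> T" "\<And>b. 0 \<le> b \<Longrightarrow> \<bar>f b\<bar> \<le> D"
  shows "\<bar>LINT b|w u. f b\<bar> \<le> D * M"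
proof -
  interpret finite_measure "w u" by (rule finite_measure_w[OF assms(1)])
  have "\<bar>LINT b|w u. f b\<bar> \<le> (LINT b|w u. \<bar>f b\<bar>)"
    using integral_norm_bound[of "w u" f] by simp
  also have "\<dots> \<le> D * M"
  proof (cases "integrable (w u) (\<lambda>b. \<bar>f b\<bar>)")
    case True
    then show ?thesis
      using assms integral_w_le[of u "\<lambda>b. \<bar>f b\<bar>" D] abs_ge_zero order_trans by blast
  next
    case False
    then show ?thesis
      using assms(3)[of 0] M_nonneg by (simp add: not_integrable_integral_eq)
  qed
  finally show ?thesis .
qed

definition pairing :: "(real \<Rightarrow> real) \<Rightarrow> real \<Rightarrow> real" where
  "pairing \<phi> u = (LINT b|w u. \<phi> b)"

definition generator :: "(real \<Rightarrow> real) \<Rightarrow> real \<Rightarrow> real" where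
  "generator \<phi> u = (LINT b|w u. (1 - b) * deriv \<phi> b + kappa \<mu> u b * (\<phi> 0 - \<phi> b))"

lemma pairing_increment_has_integral:
  assumes "test_fun \<phi>" "0 \<le> t" "t \<le> s"
  shows "(generator \<phi> has_integral (pairing \<phi> s - pairing \<phi> t)) {t..s}"
proof -
  have weak: "(generator \<phi> has_integral (pairing \<phi> r - pairing \<phi> 0)) {0..r}" if "0 \<le> r" for r
    using solution assms(1) that unfolding measure_solution_def generator_def pairing_def by blast
  have "generator \<phi> integrable_on {t..s}"
    by (rule integrable_subinterval_real[OF has_integral_integrable[OF weak[of s]]]) (use assms in auto)
  then obtain j where j: "(generator \<phi> has_integral j) {t..s}" by blast
  have "(generator \<phi> has_integral (pairing \<phi> t - pairing \<phi> 0 + j)) {0..s}"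
    by (rule has_integral_combine[OF _ _ weak[of t] j]) (use assms in auto)
  moreover have "(generator \<phi> has_integral (pairing \<phi> s - pairing \<phi> 0)) {0..s}"
    using weak assms by simp
  ultimately have "pairing \<phi> t - pairing \<phi> 0 + j = pairing \<phi> s - pairing \<phi> 0"
    by (rule has_integral_unique)
  then have "j = pairing \<phi> s - pairing \<phi> t" by linarith
  then show ?thesis using j by simp
qed

lemma pairing_lipschitz:
  assumes test: "test_fun \<phi>" and A: "\<And>b. \<bar>\<phi> b\<bar> \<le> A"
    and B: "\<And>b. 0 \<le> b \<Longrightarrow> \<bar>(1 - b) * deriv \<phi> b\<bar> \<le> B"
    and ts: "0 \<le> t" "t \<le> s" "s \<le> T"
  shows "\<bar>pairing \<phi> s - pairing \<phi> t\<bar> \<le> (s - t) * ((B + 2 * exp T * \<mu> * A) * M)"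
proof -
  have "\<bar>(1 - b) * deriv \<phi> b + kappa \<mu> u b * (\<phi> 0 - \<phi> b)\<bar> \<le> B + 2 * exp T * \<mu> * A"
    if u: "u \<in> {t..s}" and b: "0 \<le> b" for u b
  proof -
    have "kappa \<mu> u b \<le> exp u * \<mu>" using kappa_le[of \<mu> b u] mu_pos b by simp
    also have "\<dots> \<le> exp T * \<mu>" using u ts mu_pos by (intro mult_right_mono) auto
    finally have "kappa \<mu> u b \<le> exp T * \<mu>" .
    moreover have "\<bar>\<phi> 0 - \<phi> b\<bar> \<le> 2 * A" using A[of 0] A[of b] by linarith
    ultimately have "\<bar>kappa \<mu> u b * (\<phi> 0 - \<phi> b)\<bar> \<le> exp T * \<mu> * (2 * A)"
      unfolding abs_mult using kappa_nonneg[of \<mu> b u] mu_pos b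
      by (intro mult_mono) auto
    then show ?thesis using B[OF b] abs_triangle_ineq[of "(1 - b) * deriv \<phi> b"] by linarith
  qed
  then have bound: "norm (generator \<phi> u) \<le> (B + 2 * exp T * \<mu> * A) * M" if "u \<in> cbox t s" for u
    unfolding generator_def real_norm_def using ts that by (intro abs_integral_w_le) auto
  have "0 \<le> B + 2 * exp T * \<mu> * A" using A[of 0] B[of 0] mu_pos by simp
  then have nonneg: "0 \<le> (B + 2 * exp T * \<mu> * A) * M" using M_nonneg by simp
  have "(generator \<phi> has_integral (pairing \<phi> s - pairing \<phi> t)) (cbox t s)"
    using pairing_increment_has_integral[OF test ts(1,2)] by simp
  from has_integral_bound[OF nonneg this bound]
  have "norm (pairing \<phi> s - pairing \<phi> t) \<le> (B + 2 * exp T * \<mu> * A) * M * (s - t)"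
    using ts by simp
  then show ?thesis using ts by (simp add: mult.commute)
qed

end

locale bump_tracking = bounded_solution +
  fixes e B :: real
  assumes e_pos: "0 < e" and e_less_1: "e < 1" and B_ge_1: "1 \<le> B"
    and euler_bump_le: "\<And>z. \<bar>euler_bump e z\<bar> \<le> B"
    and euler_bump'_le: "\<And>z. \<bar>z * euler_bump' e z\<bar> \<le> B"
begin

text \<open>\<open>moving_bump r\<close> is centred at \<open>1 - exp (-r)\<close>, the position at time \<open>r\<close> of the characteristic
  \<open>b' = 1 - b\<close> issued from \<open>0\<close>.\<close>

definition moving_bump :: "real \<Rightarrow> real \<Rightarrow> real" where
  "moving_bump r b = bump e (exp r * (1 - b))"

definition moving_euler :: "real \<Rightarrow> real \<Rightarrow> real" where
  "moving_euler r b = euler_bump e (exp r * (1 - b))"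

definition rate_bound :: real where "rate_bound = \<mu> / (1 - e)"

definition lipschitz_const :: real where "lipschitz_const = (B + 2 * exp T * \<mu> * B) * M"

definition error_const :: real where
  "error_const = lipschitz_const + rate_bound * (B * M + lipschitz_const) + B * M"

lemma constants_nonneg: "0 \<le> rate_bound" "0 \<le> lipschitz_const" "0 \<le> error_const"
  using mu_pos e_less_1 B_ge_1 M_nonneg
  unfolding rate_bound_def lipschitz_const_def error_const_def by simp_all

lemma bump_far: "1 + e < \<bar>z\<bar> \<Longrightarrow> bump e z = 0"
  and euler_bump_far: "1 + e < \<bar>z\<bar> \<Longrightarrow> euler_bump e z = 0"
  using bump_vanishes[OF e_pos, of z] by (auto simp: euler_bump_def)

lemma test_fun_moving_bump: "test_fun (moving_bump r)"
  unfolding moving_bump_def[abs_def]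
  by (rule test_fun_reflect_scale[OF has_real_derivative_bump continuous_on_bump' bump_far]) auto

lemma test_fun_moving_euler: "test_fun (moving_euler r)"
  unfolding moving_euler_def[abs_def]
  by (rule test_fun_reflect_scale[OF has_real_derivative_euler_bump continuous_on_euler_bump'
        euler_bump_far]) auto

lemma transport_moving_bump: "(1 - b) * deriv (moving_bump r) b = - moving_euler r b"
proof -
  have "deriv (moving_bump r) b = - exp r * bump' e (exp r * (1 - b))"
    unfolding moving_bump_def[abs_def]
    by (rule DERIV_imp_deriv[OF has_real_derivative_reflect_scale[OF has_real_derivative_bump]])
  then show ?thesis unfolding moving_euler_def euler_bump_def by simp
qed

lemma transport_moving_euler:
  "(1 - b) * deriv (moving_euler r) b = - (exp r * (1 - b) * euler_bump' e (exp r * (1 - b)))"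
proof -
  have "deriv (moving_euler r) b = - exp r * euler_bump' e (exp r * (1 - b))"
    unfolding moving_euler_def[abs_def]
    by (rule DERIV_imp_deriv[OF has_real_derivative_reflect_scale[OF has_real_derivative_euler_bump]])
  then show ?thesis by simp
qed

lemma moving_bump_nonneg: "0 \<le> moving_bump r b"
  and moving_bump_le_1: "moving_bump r b \<le> 1"
  and abs_moving_euler_le: "\<bar>moving_euler r b\<bar> \<le> B"
  unfolding moving_bump_def moving_euler_def
  using bump_nonneg bump_le_1 e_pos euler_bump_le by auto

lemma moving_bump_measurable [measurable]: "moving_bump r \<in> borel_measurable borel"
  and moving_euler_measurable [measurable]: "moving_euler r \<in> borel_measurable borel"
  unfolding moving_bump_def[abs_def] moving_euler_def[abs_def]
  by (intro borel_measurable_continuous_onI continuous_on_compose2[OF continuous_on_bump]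
      continuous_on_compose2[OF continuous_on_euler_bump] continuous_intros; simp)+

lemma integrable_moving_bump: "0 \<le> u \<Longrightarrow> integrable (w u) (moving_bump r)"
  and integrable_moving_euler: "0 \<le> u \<Longrightarrow> integrable (w u) (moving_euler r)"
  using moving_bump_nonneg moving_bump_le_1 abs_moving_euler_le
  by (auto intro!: integrable_w[where D = B] simp: B_ge_1 order_trans[OF _ B_ge_1])

lemma pairing_moving_bump_lipschitz:
  assumes "0 \<le> t" "t \<le> s" "s \<le> T"
  shows "\<bar>pairing (moving_bump r) s - pairing (moving_bump r) t\<bar> \<le> (s - t) * lipschitz_const"
  unfolding lipschitz_const_def
  using moving_bump_nonneg moving_bump_le_1 B_ge_1 abs_moving_euler_le
  by (intro pairing_lipschitz[OF test_fun_moving_bump _ _ assms])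
     (auto simp: transport_moving_bump intro: order_trans[OF _ B_ge_1])

lemma pairing_moving_euler_lipschitz:
  assumes "0 \<le> t" "t \<le> s" "s \<le> T"
  shows "\<bar>pairing (moving_euler r) s - pairing (moving_euler r) t\<bar> \<le> (s - t) * lipschitz_const"
  unfolding lipschitz_const_def
  using abs_moving_euler_le euler_bump'_le
  by (intro pairing_lipschitz[OF test_fun_moving_euler _ _ assms]) (auto simp: transport_moving_euler)

lemma moving_bump_shift: "moving_bump (r + h) b = bump e (exp h * (exp r * (1 - b)))"
  and moving_euler_shift: "moving_euler (r + h) b = euler_bump e (exp h * (exp r * (1 - b)))"
  unfolding moving_bump_def moving_euler_def by (simp_all add: exp_add mult_ac)

lemma pairing_moving_bump_increment_le:
  assumes "0 \<le> u" "u \<le> T" "0 \<le> h"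
  shows "pairing (moving_bump (r + h)) u - pairing (moving_bump r) u \<le> h * B * M"
proof -
  have "bump e (exp h * z) - bump e z \<le> h * B" for z
    by (rule exp_scaling_increment_le[OF has_real_derivative_bump _ assms(3)])
       (use euler_bump_le in \<open>auto simp: euler_bump_def abs_le_iff\<close>)
  then have "moving_bump (r + h) b - moving_bump r b \<le> h * B" for b
    unfolding moving_bump_shift by (simp add: moving_bump_def)
  then have "(LINT b|w u. moving_bump (r + h) b - moving_bump r b) \<le> h * B * M"
    using assms B_ge_1 integrable_moving_bump[OF assms(1)]
    by (intro integral_w_le) auto
  then show ?thesis
    unfolding pairing_def using integrable_moving_bump[OF assms(1)] by simp
qed

lemma pairing_moving_bump_increment_ge:
  assumes "0 \<le> u" "u \<le> T" "0 \<le> h"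
  shows "h * pairing (moving_euler (r + h)) u - B * h\<^sup>2 * M
    \<le> pairing (moving_bump (r + h)) u - pairing (moving_bump r) u"
proof -
  have "h * euler_bump e (exp h * z) - B * h\<^sup>2 \<le> bump e (exp h * z) - bump e z" for z
    unfolding euler_bump_def
    by (rule exp_scaling_increment_ge[OF has_real_derivative_bump
          has_real_derivative_euler_bump[unfolded euler_bump_def[abs_def]] _ assms(3)])
       (use euler_bump'_le in \<open>auto simp: abs_le_iff\<close>)
  note increment = this
  have "h * moving_euler (r + h) b - (moving_bump (r + h) b - moving_bump r b) \<le> B * h\<^sup>2" for b
    using increment[of "exp r * (1 - b)"] unfolding moving_bump_shift moving_euler_shift unfolding moving_bump_def by linarith
  then have "(LINT b|w u. h * moving_euler (r + h) b - (moving_bump (r + h) b - moving_bump r b))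
      \<le> B * h\<^sup>2 * M"
    using assms B_ge_1 integrable_moving_bump[OF assms(1)] integrable_moving_euler[OF assms(1)]
    by (intro integral_w_le) auto
  then show ?thesis
    unfolding pairing_def using integrable_moving_bump[OF assms(1)] integrable_moving_euler[OF assms(1)]
    by simp
qed

text \<open>The drift is exactly cancelled by the motion of the bump, so only the death term costs
  mass; near the characteristic the death rate is at most \<open>rate_bound\<close>.\<close>

lemma generator_moving_bump_ge:
  assumes u: "0 \<le> u" "u \<le> s"
  shows "- pairing (moving_euler s) u - rate_bound * pairing (moving_bump s) u
    \<le> generator (moving_bump s) u"
proof -
  define I where "I b = - moving_euler s b + kappa \<mu> u b * (moving_bump s 0 - moving_bump s b)" for b
  have "I \<in> borel_measurable borel" unfolding I_def[abs_def] by measurable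
  moreover have "\<bar>I b\<bar> \<le> B + exp u * \<mu> * 1" if "0 \<le> b" for b
  proof -
    have "\<bar>moving_bump s 0 - moving_bump s b\<bar> \<le> 1"
      using moving_bump_nonneg[of s 0] moving_bump_le_1[of s 0] moving_bump_nonneg[of s b]
        moving_bump_le_1[of s b]
      by (simp add: abs_le_iff)
    then have "\<bar>kappa \<mu> u b * (moving_bump s 0 - moving_bump s b)\<bar> \<le> exp u * \<mu> * 1"
      unfolding abs_mult using kappa_le[of \<mu> b u] kappa_nonneg[of \<mu> b u] mu_pos that
      by (intro mult_mono) auto
    then show ?thesis unfolding I_def using abs_moving_euler_le[of s b] by linarith
  qed
  ultimately have "integrable (w u) I" by (rule integrable_w[OF u(1)])
  moreover have "- moving_euler s b - rate_bound * moving_bump s b \<le> I b" if "0 \<le> b" for b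
  proof -
    have "kappa \<mu> u b * moving_bump s b \<le> rate_bound * moving_bump s b"
    proof (cases "\<bar>exp s * (1 - b) - 1\<bar> < e")
      case True
      then show ?thesis unfolding rate_bound_def using moving_bump_nonneg mu_pos u e_less_1
        by (intro mult_right_mono kappa_le_near_characteristic) auto
    next
      case False
      then show ?thesis unfolding moving_bump_def using bump_vanishes(1)[OF e_pos] by simp
    qed
    moreover have "0 \<le> kappa \<mu> u b * moving_bump s 0"
      using kappa_nonneg[of \<mu> b u] mu_pos that moving_bump_nonneg by simp
    ultimately show ?thesis unfolding I_def by (simp add: algebra_simps)
  qed
  ultimately have "(LINT b|w u. - moving_euler s b - rate_bound * moving_bump s b) \<le> (LINT b|w u. I b)"
    using integrable_moving_bump[OF u(1)] integrable_moving_euler[OF u(1)] AE_w_nonneg[OF u(1)]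
    by (intro integral_mono_AE) (auto elim!: eventually_mono)
  moreover have "generator (moving_bump s) u = (LINT b|w u. I b)"
    unfolding generator_def I_def transport_moving_bump by simp
  ultimately show ?thesis
    unfolding pairing_def using integrable_moving_bump[OF u(1)] integrable_moving_euler[OF u(1)] by simp
qed

lemma generator_moving_bump_lower:
  assumes t: "0 \<le> t" "0 \<le> h" "t + h \<le> T" and u: "t \<le> u" "u \<le> t + h"
  shows "- pairing (moving_euler (t + h)) t - rate_bound * pairing (moving_bump t) t
      - h * (lipschitz_const + rate_bound * (B * M + lipschitz_const))
    \<le> generator (moving_bump (t + h)) u"
proof -
  have "(u - t) * lipschitz_const \<le> h * lipschitz_const"
    using u constants_nonneg by (intro mult_right_mono) auto
  then have euler: "pairing (moving_euler (t + h)) u \<le> pairing (moving_euler (t + h)) t + h * lipschitz_const"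
    and bump: "pairing (moving_bump (t + h)) u \<le> pairing (moving_bump (t + h)) t + h * lipschitz_const"
    using pairing_moving_euler_lipschitz[of t u "t + h"] pairing_moving_bump_lipschitz[of t u "t + h"] t u
    by auto
  have "pairing (moving_bump (t + h)) t \<le> pairing (moving_bump t) t + h * B * M"
    using pairing_moving_bump_increment_le[of t h t] t by simp
  with bump have "rate_bound * pairing (moving_bump (t + h)) u
      \<le> rate_bound * (pairing (moving_bump t) t + h * B * M + h * lipschitz_const)"
    using constants_nonneg by (intro mult_left_mono) auto
  also have "\<dots> = rate_bound * pairing (moving_bump t) t + h * (rate_bound * (B * M + lipschitz_const))"
    by (simp add: algebra_simps)
  finally show ?thesis
    using generator_moving_bump_ge[of u "t + h"] euler t u
    by (simp add: right_diff_distrib distrib_left)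
qed

lemma pairing_moving_bump_step:
  assumes t: "0 \<le> t" "0 \<le> h" "t + h \<le> T"
  shows "(1 - rate_bound * h) * pairing (moving_bump t) t - error_const * h\<^sup>2
    \<le> pairing (moving_bump (t + h)) (t + h)"
proof -
  define c where "c = - pairing (moving_euler (t + h)) t - rate_bound * pairing (moving_bump t) t
    - h * (lipschitz_const + rate_bound * (B * M + lipschitz_const))"
  have "((\<lambda>u. c) has_integral h * c) {t..t + h}"
    using has_integral_const_real[of c t "t + h"] t by simp
  then have "h * c \<le> pairing (moving_bump (t + h)) (t + h) - pairing (moving_bump (t + h)) t"
  proof (rule has_integral_le)
    show "(generator (moving_bump (t + h)) has_integral
        pairing (moving_bump (t + h)) (t + h) - pairing (moving_bump (t + h)) t) {t..t + h}"
      using pairing_increment_has_integral[OF test_fun_moving_bump t(1), of "t + h"] t by simp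
    show "c \<le> generator (moving_bump (t + h)) u" if "u \<in> {t..t + h}" for u
      unfolding c_def using generator_moving_bump_lower[OF t] that by simp
  qed
  moreover have "h * pairing (moving_euler (t + h)) t - B * h\<^sup>2 * M
      \<le> pairing (moving_bump (t + h)) t - pairing (moving_bump t) t"
    using pairing_moving_bump_increment_ge[of t h t] t by simp
  moreover have "h * c = - h * pairing (moving_euler (t + h)) t - h * rate_bound * pairing (moving_bump t) t
      - h\<^sup>2 * (lipschitz_const + rate_bound * (B * M + lipschitz_const))"
    unfolding c_def power2_eq_square by (simp only: algebra_simps)
  moreover have "error_const * h\<^sup>2
      = h\<^sup>2 * (lipschitz_const + rate_bound * (B * M + lipschitz_const)) + B * h\<^sup>2 * M"
    unfolding error_const_def by (simp only: algebra_simps)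
  moreover have "(1 - rate_bound * h) * pairing (moving_bump t) t
      = pairing (moving_bump t) t - h * rate_bound * pairing (moving_bump t) t"
    by (simp only: algebra_simps)
  ultimately show ?thesis by linarith
qed

lemma pairing_moving_bump_ge: "exp (- (rate_bound * T)) \<le> pairing (moving_bump T) T"
proof -
  have "pairing (moving_bump 0) 0 = 1"
    unfolding pairing_def w_0 integral_return[OF _ moving_bump_measurable, simplified]
    using bump_at_1[OF e_pos] by (simp add: moving_bump_def)
  then show ?thesis
    using discrete_gronwall_lower[where a = "\<lambda>t. pairing (moving_bump t) t" and K = rate_bound
        and C = error_const]
      pairing_moving_bump_step horizon constants_nonneg by simp
qed

lemma mass_near_characteristic:
  "exp (- (\<mu> / (1 - e) * T)) \<le> measure (w T) {b. \<bar>exp T * (1 - b) - 1\<bar> \<le> e}"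
proof -
  define S where "S = {b. \<bar>exp T * (1 - b) - 1\<bar> \<le> e}"
  have S: "S \<in> sets borel" unfolding S_def by measurable
  have "moving_bump T b \<le> indicator S b" for b
    using moving_bump_le_1 bump_vanishes(1)[OF e_pos]
    unfolding S_def moving_bump_def by (auto simp: indicator_def)
  moreover have "integrable (w T) (indicator S :: real \<Rightarrow> real)"
    by (rule integrable_w[OF horizon, where D = 1]) (use S in auto)
  ultimately have "pairing (moving_bump T) T \<le> (LINT b|w T. indicator S b)"
    unfolding pairing_def by (intro integral_mono integrable_moving_bump[OF horizon])
  also have "\<dots> = measure (w T) S" using space_w[OF horizon] by simp
  finally show ?thesis using pairing_moving_bump_ge unfolding S_def rate_bound_def by simp
qed

end

lemma measure_Inter_ge_limit:
  assumes m: "finite_measure m" and S: "range S \<subseteq> sets m" "decseq S"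
    and c: "c \<longlonglongrightarrow> l" "\<And>n. c n \<le> measure m (S n)"
  shows "l \<le> measure m (\<Inter>n. S n)"
  using LIMSEQ_le[OF c(1) finite_measure.finite_Lim_measure_decseq[OF m S]] c(2) by blast

lemma Inter_abs_le_inverse:
  fixes f :: "'a \<Rightarrow> real"
  shows "(\<Inter>n. {x. \<bar>f x\<bar> \<le> 1 / (real n + 2)}) = {x. f x = 0}"
proof (intro set_eqI iffI)
  fix x assume x: "x \<in> (\<Inter>n. {x. \<bar>f x\<bar> \<le> 1 / (real n + 2)})"
  show "x \<in> {x. f x = 0}"
  proof (rule ccontr)
    assume "x \<notin> {x. f x = 0}"
    then obtain n :: nat where n: "0 < n" "inverse (real n) < \<bar>f x\<bar>"
      using ex_inverse_of_nat_less[of "\<bar>f x\<bar>"] by auto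
    have "1 / (real n + 2) \<le> inverse (real n)" using n by (simp add: inverse_eq_divide frac_le)
    moreover have "\<bar>f x\<bar> \<le> 1 / (real n + 2)" using x by blast
    ultimately show False using n by linarith
  qed
qed auto

lemma solution_atom_at_characteristic:
  assumes mu: "0 < \<mu>" and sol: "measure_solution \<mu> w" and \<tau>: "0 \<le> \<tau>"
  shows "exp (- \<mu> * \<tau>) \<le> measure (w \<tau>) {1 - exp (- \<tau>)}"
proof -
  obtain M where M: "\<forall>u\<in>{0..\<tau>}. measure (w u) UNIV \<le> M"
    using sol \<tau> unfolding measure_solution_def by blast
  define e where "e n = 1 / (real n + 2)" for n :: nat
  define S where "S n = {b. \<bar>exp \<tau> * (1 - b) - 1\<bar> \<le> e n}" for n
  have "\<forall>n. \<exists>B\<ge>1. \<forall>z. \<bar>euler_bump (e n) z\<bar> \<le> B \<and> \<bar>z * euler_bump' (e n) z\<bar> \<le> B"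
    by (intro allI euler_bump_bounded) (simp add: e_def)
  then obtain B where "\<And>n. 1 \<le> B n \<and> (\<forall>z. \<bar>euler_bump (e n) z\<bar> \<le> B n \<and> \<bar>z * euler_bump' (e n) z\<bar> \<le> B n)"
    by metis
  then have "bump_tracking \<mu> w M \<tau> (e n) (B n)" for n
    by unfold_locales (use mu sol M \<tau> in \<open>auto simp: e_def\<close>)
  then have lower: "exp (- (\<mu> / (1 - e n) * \<tau>)) \<le> measure (w \<tau>) (S n)" for n
    unfolding S_def by (rule bump_tracking.mass_near_characteristic)
  have "e \<longlonglongrightarrow> 0"
    unfolding e_def using LIMSEQ_ignore_initial_segment[OF lim_1_over_n, of 2] by (simp add: add.commute)
  then have lim: "(\<lambda>n. exp (- (\<mu> / (1 - e n) * \<tau>))) \<longlonglongrightarrow> exp (- (\<mu> / (1 - 0) * \<tau>))"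
    by (intro tendsto_intros) auto
  have dec: "decseq S"
    unfolding S_def e_def by (intro decseq_SucI) (auto simp: frac_le intro: order_trans)
  have w: "finite_measure (w \<tau>)" "range S \<subseteq> sets (w \<tau>)"
    using sol \<tau> unfolding S_def measure_solution_def by auto
  have "exp (- (\<mu> / (1 - 0) * \<tau>)) \<le> measure (w \<tau>) (\<Inter>n. S n)"
    by (rule measure_Inter_ge_limit[OF w dec lim lower])
  moreover have "(\<Inter>n. S n) = {1 - exp (- \<tau>)}"
    unfolding S_def e_def Inter_abs_le_inverse by (auto simp: exp_minus field_simps)
  ultimately show ?thesis by simp
qed

theorem proposition5:
  fixes \<mu> :: real and w :: "real \<Rightarrow> real measure" and C :: "real \<Rightarrow> real"
  assumes "0 < \<mu>" and "\<mu> < 1"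
    and "measure_solution \<mu> w"
    and "\<And>\<tau>. \<tau> \<ge> 0 \<Longrightarrow> C \<tau> > 0 \<and> (LINT b:{0..<1}|lborel. Wprof \<mu> C \<tau> b) = 1"
    and "\<tau> \<ge> 0"
  shows "tv_norm {0..<1} (\<lambda>A. (LINT b:A|lborel. Wprof \<mu> C \<tau> b) - measure (w \<tau>) A)
           \<ge> exp (- \<mu> * \<tau>)"
proof -
  have "set_integrable lborel {0..<1} (Wprof \<mu> C \<tau>)"
    using assms(4)[OF assms(5)] not_integrable_integral_eq
    unfolding set_integrable_def set_lebesgue_integral_def by fastforce
  moreover have "0 \<le> Wprof \<mu> C \<tau> b" for b
    using assms(4)[OF assms(5)] by (simp add: Wprof_def)
  moreover have "1 - exp (- \<tau>) \<in> {0..<1}" using assms(5) by simp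
  ultimately have "measure (w \<tau>) {1 - exp (- \<tau>)}
      \<le> tv_norm {0..<1} (\<lambda>A. (LINT b:A|lborel. Wprof \<mu> C \<tau> b) - measure (w \<tau>) A)"
    using assms(3,5) unfolding measure_solution_def
    by (intro tv_norm_ge_atom) auto
  then show ?thesis
    using solution_atom_at_characteristic[OF assms(1,3,5)] by linarith
qed

end
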